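(* With the icosahedral setting of the context, let $\omega>0$, let $p$ be a homogeneous polynomial of degree $n$ in $x\in\mathbb{R}^3$ and let $y_0\in\mathcal{I}$. Then \[ \langle p,q_n(\cdot;y_0)\rangle_{\kappa,\omega}=(2\omega)^{-n}\nu(n)\,p(y_0). \]
   Context: Let $\tau=(1+\sqrt5)/2$. Vectors in $\mathbb{R}^3$ are row vectors; $\langle x,y\rangle=\sum x_iy_i$. For $v\neq0$, $x\sigma_v=x-2\frac{\langle x,v\rangle}{|v|^2}v$. Let $R_+=\{(2,0,0),(0,2,0),(0,0,2),(\tau,\pm\tau^{-1},\pm1),(\pm1,\tau,\pm\tau^{-1}),(\tau^{-1},\pm1,\tau),(-\tau^{-1},1,\tau),(\tau^{-1},1,-\tau)\}$ (15 vectors, signs independent). For real $\kappa\ge0$ the Dunkl operators are $\mathcal{D}_if(x)=\partial_if(x)+\kappa\sum_{v\in R_+}\frac{f(x)-f(x\sigma_v)}{\langle x,v\rangle}v_i$; they commute pairwise. For polynomials $p,q$ define the bilinear form $\langle p,q\rangle_{\kappa,\omega}=p\left(\frac{1}{2\omega}\mathcal{D}_1,\frac{1}{2\omega}\mathcal{D}_2,\frac{1}{2\omega}\mathcal{D}_3\right)q(x)\big|_{x=0}$. Let $\mathcal{I}=\{(0,\pm\tau,\pm1),(\pm1,0,\pm\tau),(\pm\tau,\pm1,0)\}$. For $y_0\in\mathcal{I}$, $q_n(x;y_0)$ are defined by $\left(1-r\langle x,y_0\rangle\right)^{-1}\prod_{y\in\mathcal{I}}\left(1-r\langle x,y\rangle\right)^{-\kappa}=\sum_{n\ge0}q_n(x;y_0)r^n$.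 Define $\nu(n)=2^n(6\kappa+1)_s(5\kappa+\tfrac12)_t$ with $s=\lfloor n/2\rfloor$, $t=\lfloor (n+1)/2\rfloor$, $(a)_k=a(a+1)\cdots(a+k-1)$. *)

theory Defs
  imports "HOL-Analysis.Analysis" "HOL-Computational_Algebra.Formal_Power_Series"
begin

definition tau :: real where "tau = (1 + sqrt 5) / 2"

definition vec3 :: "real \<Rightarrow> real \<Rightarrow> real \<Rightarrow> real^3" where
  "vec3 a b c = (\<chi> i. if i = 1 then a else if i = 2 then b else c)"

definition refl :: "real^3 \<Rightarrow> real^3 \<Rightarrow> real^3" where
  "refl v x = x - (2 * (x \<bullet> v) / (v \<bullet> v)) *\<^sub>R v"

definition Rplus :: "(real^3) set" where
  "Rplus = {vec3 2 0 0, vec3 0 2 0, vec3 0 0 2}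
     \<union> {vec3 tau (s * inverse tau) t | s t. s \<in> {-1,1} \<and> t \<in> {-1,1}}
     \<union> {vec3 s tau (t * inverse tau) | s t. s \<in> {-1,1} \<and> t \<in> {-1,1}}
     \<union> {vec3 (inverse tau) s tau | s. s \<in> {-1,1}}
     \<union> {vec3 (- inverse tau) 1 tau, vec3 (inverse tau) 1 (- tau)}"

definition Ico :: "(real^3) set" where
  "Ico = {vec3 0 (s * tau) t | s t. s \<in> {-1,1} \<and> t \<in> {-1,1}}
     \<union> {vec3 s 0 (t * tau) | s t. s \<in> {-1,1} \<and> t \<in> {-1,1}}
     \<union> {vec3 (s * tau) t 0 | s t. s \<in> {-1,1} \<and> t \<in> {-1,1}}"

definition partial :: "3 \<Rightarrow> (real^3 \<Rightarrow> real) \<Rightarrow> real^3 \<Rightarrow> real" where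
  "partial i f x = deriv (\<lambda>t. f (x + t *\<^sub>R axis i 1)) 0"

text \<open>Divided difference (f(x) - f(x sigma_v)) / <x,v>, extended continuously
  to the hyperplane <x,v> = 0 (it is a polynomial when f is).\<close>
definition divdiff :: "real^3 \<Rightarrow> (real^3 \<Rightarrow> real) \<Rightarrow> real^3 \<Rightarrow> real" where
  "divdiff v f x =
     (if x \<bullet> v \<noteq> 0 then (f x - f (refl v x)) / (x \<bullet> v)
      else Lim (at x within {y. y \<bullet> v \<noteq> 0}) (\<lambda>y. (f y - f (refl v y)) / (y \<bullet> v)))"

definition dunkl :: "real \<Rightarrow> 3 \<Rightarrow> (real^3 \<Rightarrow> real) \<Rightarrow> real^3 \<Rightarrow> real" where
  "dunkl \<kappa> i f x = partial i f x + \<kappa> * (\<Sum>v\<in>Rplus. divdiff v f x * v $ i)"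

text \<open>Polynomials in x in R^3 are given by coefficient functions on exponent
  triples (a,b,c), with finite support.\<close>
definition mono_eval :: "nat \<times> nat \<times> nat \<Rightarrow> real^3 \<Rightarrow> real" where
  "mono_eval \<alpha> y = (case \<alpha> of (a,b,c) \<Rightarrow> (y$1)^a * (y$2)^b * (y$3)^c)"

definition mdeg :: "nat \<times> nat \<times> nat \<Rightarrow> nat" where
  "mdeg \<alpha> = (case \<alpha> of (a,b,c) \<Rightarrow> a + b + c)"

definition poly_eval :: "(nat \<times> nat \<times> nat \<Rightarrow> real) \<Rightarrow> real^3 \<Rightarrow> real" where
  "poly_eval p y = (\<Sum>\<alpha>\<in>{\<alpha>. p \<alpha> \<noteq> 0}. p \<alpha> * mono_eval \<alpha> y)"

definition homogeneous :: "(nat \<times> nat \<times> nat \<Rightarrow> real) \<Rightarrow> nat \<Rightarrow> bool" where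
  "homogeneous p n \<longleftrightarrow> (\<forall>\<alpha>. p \<alpha> \<noteq> 0 \<longrightarrow> mdeg \<alpha> = n)"

definition pairing :: "real \<Rightarrow> real \<Rightarrow> (nat \<times> nat \<times> nat \<Rightarrow> real) \<Rightarrow> (real^3 \<Rightarrow> real) \<Rightarrow> real" where
  "pairing \<kappa> \<omega> p q = (\<Sum>\<alpha>\<in>{\<alpha>. p \<alpha> \<noteq> 0}. case \<alpha> of (a,b,c) \<Rightarrow>
      p \<alpha> * (1 / (2 * \<omega>)) ^ (a + b + c) *
      ((dunkl \<kappa> 1 ^^ a) ((dunkl \<kappa> 2 ^^ b) ((dunkl \<kappa> 3 ^^ c) q))) 0)"

text \<open>Formal binomial series of (1 - a r)^(-k) in the variable r.\<close>
definition negpow_fps :: "real \<Rightarrow> real \<Rightarrow> real fps" where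
  "negpow_fps k a = Abs_fps (\<lambda>m. pochhammer k m / fact m * a ^ m)"

definition qn :: "real \<Rightarrow> real^3 \<Rightarrow> nat \<Rightarrow> real^3 \<Rightarrow> real" where
  "qn \<kappa> y0 n x = fps_nth (inverse (1 - fps_const (x \<bullet> y0) * fps_X)
       * (\<Prod>y\<in>Ico. negpow_fps \<kappa> (x \<bullet> y))) n"

definition nu :: "real \<Rightarrow> nat \<Rightarrow> real" where
  "nu \<kappa> n = 2 ^ n * pochhammer (6 * \<kappa> + 1) (n div 2) * pochhammer (5 * \<kappa> + 1/2) ((n + 1) div 2)"

end

theory Submission
  imports Defs
begin

text \<open>
  Let F(x, r) = (1 - r<x,y0>)^-1 P(x, r) be the generating function of the q_n, where
  P(x, r) = prod_{y in I} (1 - r<x,y>)^-kappa is invariant under the reflections in R_+ and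
  under r \<mapsto> -r. The reflections in R_+ move y0 onto every vertex of I other than y0 and -y0
  exactly once; with this, the reflection terms of D_i combine with the derivative of P into
    D_i F = r y0_i (d/dr (r F(x, r)) + 11 kappa F(x, r) - kappa F(x, -r)),
  where 11 = |I| - 1. Comparing coefficients gives
  D_i q_(m+1) = (m + 1 + 11 kappa - (-1)^m kappa) y0_i q_m, and this factor is nu(m+1)/nu(m).
  Hence D^alpha q_n (0) = nu(n) y0^alpha whenever |alpha| = n, and pairing with p yields nu(n) p(y0).
\<close>

section \<open>The golden ratio and exact arithmetic in Q(tau)\<close>

lemma tau_pos: "tau > 0"
  unfolding tau_def by (simp add: add_pos_nonneg)

lemma tau_mult_self: "tau * tau = tau + 1"
proof -
  have "sqrt 5 * sqrt 5 = (5::real)" by simp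
  then show ?thesis unfolding tau_def by (simp add: field_simps)
qed

lemma inverse_tau: "inverse tau = tau - 1"
  using tau_mult_self tau_pos by (simp add: field_simps)

lemma tau_irrational: "tau \<notin> \<rat>"
proof
  assume "tau \<in> \<rat>"
  then obtain p q :: int where q: "q > 0" and cp: "coprime p q" and t: "tau = of_int p / of_int q"
    by (elim Rats_cases')
  have "(of_int p / of_int q) * (of_int p / of_int q) = (of_int p / of_int q :: real) + 1"
    using tau_mult_self t by simp
  then have "real_of_int (p * p) = of_int (p * q + q * q)" using q by (simp add: field_simps)
  then have pq: "p * p = p * q + q * q" by linarith
  then have "q dvd p * p" by (metis dvd_add_right_iff dvd_triv_right mult.commute)
  moreover have "coprime (p * p) q" using cp by simp
  ultimately have "is_unit q" by (meson coprime_common_divisor dvd_refl)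
  with q have "q = 1" by auto
  with pq have "p * (p - 1) = 1" by (simp add: algebra_simps)
  then have "p dvd 1" by (metis dvd_def)
  then have "p = 1 \<or> p = -1" using zdvd1_eq by auto
  with pq \<open>q = 1\<close> show False by auto
qed

text \<open>
  A pair (a, b) stands for a + b tau, multiplied using tau^2 = tau + 1. Since tau is irrational
  the representation is faithful, so identities between the coordinates of the vectors in I and
  R_+ can be decided by rational arithmetic.
\<close>

type_synonym qtau = "rat \<times> rat"

definition qtau_val :: "qtau \<Rightarrow> real" where
  "qtau_val x = of_rat (fst x) + of_rat (snd x) * tau"

fun qtau_add :: "qtau \<Rightarrow> qtau \<Rightarrow> qtau" where
  "qtau_add (a, b) (c, d) = (a + c, b + d)"

fun qtau_mult :: "qtau \<Rightarrow> qtau \<Rightarrow> qtau" where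
  "qtau_mult (a, b) (c, d) = (a * c + b * d, a * d + b * c + b * d)"

fun qtau_uminus :: "qtau \<Rightarrow> qtau" where
  "qtau_uminus (a, b) = (- a, - b)"

fun qtau_half :: "qtau \<Rightarrow> qtau" where
  "qtau_half (a, b) = (a / 2, b / 2)"

lemma qtau_val_add: "qtau_val (qtau_add x y) = qtau_val x + qtau_val y"
  by (cases x; cases y) (simp add: qtau_val_def of_rat_add algebra_simps)

lemma qtau_val_mult: "qtau_val (qtau_mult x y) = qtau_val x * qtau_val y"
proof (cases x; cases y)
  fix a b c d assume xy: "x = (a, b)" "y = (c, d)"
  have "qtau_val (qtau_mult (a, b) (c, d)) = of_rat a * of_rat c + of_rat b * of_rat d
      + (of_rat a * of_rat d + of_rat b * of_rat c + of_rat b * of_rat d) * tau"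
    by (simp add: qtau_val_def of_rat_add of_rat_mult)
  also have "\<dots> = (of_rat a + of_rat b * tau) * (of_rat c + of_rat d * tau)"
    using tau_mult_self by algebra
  finally show ?thesis using xy by (simp add: qtau_val_def)
qed

lemma qtau_val_uminus: "qtau_val (qtau_uminus x) = - qtau_val x"
  by (cases x) (simp add: qtau_val_def of_rat_minus)

lemma qtau_val_half: "qtau_val (qtau_half x) = qtau_val x / 2"
  by (cases x) (simp add: qtau_val_def of_rat_divide field_simps)

lemma qtau_val_eq_iff: "qtau_val x = qtau_val y \<longleftrightarrow> x = y"
proof
  assume eq: "qtau_val x = qtau_val y"
  obtain a b c d where xy: "x = (a, b)" "y = (c, d)" by (cases x; cases y)
  have "b = d"
  proof (rule ccontr)
    assume "b \<noteq> d"
    then have "of_rat b - of_rat d \<noteq> (0::real)" by (simp add: of_rat_eq_iff)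
    moreover have "(of_rat b - of_rat d) * tau = of_rat c - of_rat a"
      using eq xy by (simp add: qtau_val_def algebra_simps)
    ultimately have "tau = of_rat ((c - a) / (b - d))"
      by (simp add: of_rat_divide of_rat_diff field_simps)
    with tau_irrational show False by (metis Rats_of_rat)
  qed
  then show "x = y" using eq xy by (simp add: qtau_val_def of_rat_eq_iff)
qed simp

lemma vec3_nth [simp]: "vec3 a b c $ 1 = a" "vec3 a b c $ 2 = b" "vec3 a b c $ 3 = c"
  unfolding vec3_def by simp_all

lemma vec3_eq_iff: "vec3 a b c = vec3 d e f \<longleftrightarrow> a = d \<and> b = e \<and> c = f"
  by (metis vec3_nth)

lemma vec_eq_iff_3: "(x::real^3) = y \<longleftrightarrow> x $ 1 = y $ 1 \<and> x $ 2 = y $ 2 \<and> x $ 3 = y $ 3"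
  by (simp add: vec_eq_iff forall_3)

lemma inner_vec3: "vec3 a b c \<bullet> vec3 d e f = a * d + b * e + c * f"
  unfolding inner_vec_def sum_3 by simp

lemma vec3_diff: "vec3 a b c - vec3 d e f = vec3 (a - d) (b - e) (c - f)"
  by (simp add: vec_eq_iff_3)

lemma vec3_scaleR: "k *\<^sub>R vec3 a b c = vec3 (k * a) (k * b) (k * c)"
  by (simp add: vec_eq_iff_3)

type_synonym qvec = "qtau \<times> qtau \<times> qtau"

definition qvec_val :: "qvec \<Rightarrow> real^3" where
  "qvec_val v = (case v of (p, q, r) \<Rightarrow> vec3 (qtau_val p) (qtau_val q) (qtau_val r))"

fun qvec_inner :: "qvec \<Rightarrow> qvec \<Rightarrow> qtau" where
  "qvec_inner (p1, p2, p3) (q1, q2, q3) =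
     qtau_add (qtau_mult p1 q1) (qtau_add (qtau_mult p2 q2) (qtau_mult p3 q3))"

fun qvec_uminus :: "qvec \<Rightarrow> qvec" where
  "qvec_uminus (p, q, r) = (qtau_uminus p, qtau_uminus q, qtau_uminus r)"

fun qvec_axpy :: "qtau \<Rightarrow> qvec \<Rightarrow> qvec \<Rightarrow> qvec" where
  "qvec_axpy c (p1, p2, p3) (q1, q2, q3) =
     (qtau_add (qtau_mult c p1) q1, qtau_add (qtau_mult c p2) q2, qtau_add (qtau_mult c p3) q3)"

text \<open>This agrees with refl only for vectors v with <v,v> = 4, as for all positive roots.\<close>
definition qvec_refl :: "qvec \<Rightarrow> qvec \<Rightarrow> qvec" where
  "qvec_refl v y = qvec_axpy (qtau_uminus (qtau_half (qvec_inner y v))) v y"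

lemma qvec_val_eq_iff: "qvec_val x = qvec_val y \<longleftrightarrow> x = y"
  by (cases x; cases y) (simp add: qvec_val_def vec3_eq_iff qtau_val_eq_iff)

lemma inj_qvec_val: "inj qvec_val"
  by (simp add: inj_def qvec_val_eq_iff)

lemma qvec_val_inner: "qvec_val x \<bullet> qvec_val y = qtau_val (qvec_inner x y)"
  by (cases x; cases y) (simp only: qvec_val_def prod.case qvec_inner.simps inner_vec3 qtau_val_add qtau_val_mult)

lemma qvec_val_uminus: "qvec_val (qvec_uminus x) = - qvec_val x"
  by (cases x) (simp add: qvec_val_def vec_eq_iff_3 qtau_val_uminus del: qtau_uminus.simps)

lemma qvec_val_refl:
  assumes "qvec_inner v v = (4, 0)"
  shows "refl (qvec_val v) (qvec_val y) = qvec_val (qvec_refl v y)"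
proof -
  have vv: "qvec_val v \<bullet> qvec_val v = 4" using assms by (simp add: qvec_val_inner qtau_val_def)
  obtain v1 v2 v3 y1 y2 y3 where v: "v = (v1, v2, v3)" and y: "y = (y1, y2, y3)"
    by (cases v; cases y) auto
  show ?thesis
    unfolding refl_def vv qvec_refl_def
    by (simp add: v y vec3_diff vec3_scaleR vec3_eq_iff qtau_val_add qtau_val_mult qtau_val_uminus
        qtau_val_half qvec_val_inner[symmetric] inner_vec3 algebra_simps qvec_val_def)
qed

section \<open>The icosahedral vectors and the reflections in the positive roots\<close>

definition ico_qvecs :: "qvec list" where
  "ico_qvecs = [((0,0),(0,-1),(-1,0)), ((0,0),(0,-1),(1,0)), ((0,0),(0,1),(-1,0)), ((0,0),(0,1),(1,0)),
    ((-1,0),(0,0),(0,-1)), ((-1,0),(0,0),(0,1)), ((1,0),(0,0),(0,-1)), ((1,0),(0,0),(0,1)),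
    ((0,-1),(-1,0),(0,0)), ((0,-1),(1,0),(0,0)), ((0,1),(-1,0),(0,0)), ((0,1),(1,0),(0,0))]"

definition pos_root_qvecs :: "qvec list" where
  "pos_root_qvecs = [((2,0),(0,0),(0,0)), ((0,0),(2,0),(0,0)), ((0,0),(0,0),(2,0)),
    ((0,1),(1,-1),(-1,0)), ((0,1),(1,-1),(1,0)), ((0,1),(-1,1),(-1,0)), ((0,1),(-1,1),(1,0)),
    ((-1,0),(0,1),(1,-1)), ((-1,0),(0,1),(-1,1)), ((1,0),(0,1),(1,-1)), ((1,0),(0,1),(-1,1)),
    ((-1,1),(-1,0),(0,1)), ((-1,1),(1,0),(0,1)), ((1,-1),(1,0),(0,1)), ((-1,1),(1,0),(0,-1))]"

lemma setcompr_signs2: "{f s t | s t. s \<in> {-1, 1::real} \<and> t \<in> {-1, 1::real}} = {f (-1) (-1), f (-1) 1, f 1 (-1), f 1 1}"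
  by auto

lemma setcompr_signs: "{f s | s. s \<in> {-1, 1::real}} = {f (-1), f 1}"
  by auto

lemma Ico_eq_image: "Ico = qvec_val ` set ico_qvecs"
  unfolding Ico_def setcompr_signs2 ico_qvecs_def
  by (simp add: qvec_val_def qtau_val_def algebra_simps insert_commute)

lemma Rplus_eq_image: "Rplus = qvec_val ` set pos_root_qvecs"
  unfolding Rplus_def setcompr_signs2 setcompr_signs pos_root_qvecs_def
  by (simp add: qvec_val_def qtau_val_def inverse_tau algebra_simps insert_commute)

lemma distinct_ico_qvecs: "distinct ico_qvecs" and length_ico_qvecs: "length ico_qvecs = 12"
  by (simp_all add: ico_qvecs_def)

lemma pos_root_qvecs_inner_self: "\<forall>r\<in>set pos_root_qvecs. qvec_inner r r = (4, 0)"
  by (simp add: pos_root_qvecs_def)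

lemma ico_qvecs_refl_closed:
  "\<forall>r\<in>set pos_root_qvecs. \<forall>y\<in>set ico_qvecs. qvec_refl r y \<in> set ico_qvecs"
  by (simp add: pos_root_qvecs_def ico_qvecs_def qvec_refl_def)

lemma ico_qvecs_uminus_closed:
  "\<forall>y\<in>set ico_qvecs. qvec_uminus y \<in> set ico_qvecs \<and> qvec_uminus y \<noteq> y"
  by (simp add: ico_qvecs_def)

lemma ico_qvecs_refl_orbit:
  "\<forall>y\<in>set ico_qvecs.
     distinct (map (\<lambda>r. qvec_refl r y) (filter (\<lambda>r. qvec_refl r y \<noteq> y) pos_root_qvecs)) \<and>
     qvec_uminus y \<notin> set (map (\<lambda>r. qvec_refl r y) (filter (\<lambda>r. qvec_refl r y \<noteq> y) pos_root_qvecs)) \<and>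
     length (filter (\<lambda>r. qvec_refl r y \<noteq> y) pos_root_qvecs) = 10"
  by (simp add: pos_root_qvecs_def ico_qvecs_def qvec_refl_def)

lemma finite_Ico: "finite Ico" and finite_Rplus: "finite Rplus"
  by (simp_all add: Ico_eq_image Rplus_eq_image)

lemma card_Ico: "card Ico = 12"
  by (simp add: Ico_eq_image card_image inj_on_subset[OF inj_qvec_val] distinct_card
      distinct_ico_qvecs length_ico_qvecs)

lemma refl_qvec_val:
  "r \<in> set pos_root_qvecs \<Longrightarrow> refl (qvec_val r) (qvec_val y) = qvec_val (qvec_refl r y)"
  using pos_root_qvecs_inner_self by (simp add: qvec_val_refl)

lemma Rplus_inner_self:
  assumes "v \<in> Rplus"
  shows "v \<bullet> v = 4"
proof -
  obtain r where "r \<in> set pos_root_qvecs" "v = qvec_val r"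
    using assms by (auto simp: Rplus_eq_image)
  with pos_root_qvecs_inner_self show ?thesis by (simp add: qvec_val_inner qtau_val_def)
qed

lemma refl_mem_Ico: "v \<in> Rplus \<Longrightarrow> y \<in> Ico \<Longrightarrow> refl v y \<in> Ico"
  using ico_qvecs_refl_closed by (auto simp: Rplus_eq_image Ico_eq_image refl_qvec_val)

lemma uminus_mem_Ico: "y \<in> Ico \<Longrightarrow> - y \<in> Ico"
  using ico_qvecs_uminus_closed by (auto simp: Ico_eq_image qvec_val_uminus[symmetric])

lemma inner_refl_left: "refl v x \<bullet> y = x \<bullet> refl v y"
  unfolding refl_def by (simp add: inner_diff_left inner_diff_right inner_commute)

lemma diff_refl: "x - refl v x = (2 * (x \<bullet> v) / (v \<bullet> v)) *\<^sub>R v"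
  unfolding refl_def by simp

lemma refl_refl: "v \<bullet> v \<noteq> 0 \<Longrightarrow> refl v (refl v x) = x"
  unfolding refl_def by (simp add: inner_diff_left inner_commute algebra_simps field_simps)

lemma bij_betw_refl_Ico: "v \<in> Rplus \<Longrightarrow> bij_betw (refl v) Ico Ico"
  by (rule bij_betw_byWitness[where f' = "refl v"])
    (auto simp: refl_refl Rplus_inner_self refl_mem_Ico)

lemma bij_betw_uminus_Ico: "bij_betw uminus Ico Ico"
  by (rule bij_betw_byWitness[where f' = uminus]) (auto simp: uminus_mem_Ico)

lemma Rplus_refl_orbit:
  assumes "y0 \<in> Ico"
  defines "S \<equiv> {v \<in> Rplus. refl v y0 \<noteq> y0}"
  shows "inj_on (\<lambda>v. refl v y0) S" and "(\<lambda>v. refl v y0) ` S = Ico - {y0, - y0}"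
proof -
  obtain y where y: "y \<in> set ico_qvecs" "y0 = qvec_val y"
    using assms by (auto simp: Ico_eq_image)
  define f where "f r = qvec_refl r y" for r
  define rs where "rs = filter (\<lambda>r. f r \<noteq> y) pos_root_qvecs"
  have refl_val: "refl (qvec_val r) y0 = qvec_val (f r)" if "r \<in> set pos_root_qvecs" for r
    using that by (simp add: y(2) f_def refl_qvec_val)
  have S_eq: "S = qvec_val ` set rs"
    unfolding S_def rs_def Rplus_eq_image using refl_val y(2) by (auto simp: qvec_val_eq_iff)
  have orbit: "distinct (map f rs)" "qvec_uminus y \<notin> set (map f rs)" "length rs = 10"
    using ico_qvecs_refl_orbit y(1) unfolding f_def rs_def by auto
  have inj_f: "inj_on f (set rs)"
    using orbit(1) by (simp add: distinct_map)
  have "set (map f rs) \<subseteq> set ico_qvecs - {y, qvec_uminus y}"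
    using ico_qvecs_refl_closed y(1) orbit(2) by (auto simp: rs_def f_def)
  moreover have "card (set ico_qvecs - {y, qvec_uminus y}) = 10"
  proof -
    have "qvec_uminus y \<in> set ico_qvecs" "qvec_uminus y \<noteq> y"
      using ico_qvecs_uminus_closed y(1) by auto
    then show ?thesis
      using y(1) by (simp add: card_Diff_subset distinct_card distinct_ico_qvecs length_ico_qvecs)
  qed
  moreover have "card (set (map f rs)) = 10"
    using distinct_card[OF orbit(1)] orbit(3) by simp
  ultimately have f_image: "f ` set rs = set ico_qvecs - {y, qvec_uminus y}"
    by (metis card_subset_eq finite_Diff finite_set set_map)
  show "inj_on (\<lambda>v. refl v y0) S"
    unfolding S_eq using inj_f refl_val
    by (auto simp: inj_on_def qvec_val_eq_iff rs_def)
  have "(\<lambda>v. refl v y0) ` S = qvec_val ` f ` set rs"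
    unfolding S_eq image_image using refl_val by (auto simp: rs_def)
  also have "\<dots> = Ico - {y0, - y0}"
    unfolding f_image Ico_eq_image y(2) qvec_val_uminus[symmetric]
    by (auto simp: qvec_val_eq_iff)
  finally show "(\<lambda>v. refl v y0) ` S = Ico - {y0, - y0}" .
qed

lemma sum_Rplus_refl:
  fixes f :: "real^3 \<Rightarrow> 'a::comm_monoid_add"
  assumes "y0 \<in> Ico" and "f y0 = 0"
  shows "(\<Sum>v\<in>Rplus. f (refl v y0)) = (\<Sum>y\<in>Ico - {- y0}. f y)"
proof -
  define S where "S = {v \<in> Rplus. refl v y0 \<noteq> y0}"
  have "(\<Sum>v\<in>Rplus. f (refl v y0)) = (\<Sum>v\<in>S. f (refl v y0))"
    using assms(2) finite_Rplus by (intro sum.mono_neutral_right) (auto simp: S_def)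
  also have "\<dots> = (\<Sum>y\<in>Ico - {y0, - y0}. f y)"
    using sum.reindex[OF Rplus_refl_orbit(1)[OF assms(1)], of f] Rplus_refl_orbit(2)[OF assms(1)]
    by (simp add: S_def comp_def)
  also have "\<dots> = (\<Sum>y\<in>Ico - {- y0}. f y)"
    using assms(2) finite_Ico by (intro sum.mono_neutral_left) auto
  finally show ?thesis .
qed

section \<open>The power series (1 - a r)^-k\<close>

definition geom_fps :: "real \<Rightarrow> real fps" where
  "geom_fps a = inverse (1 - fps_const a * fps_X)"

lemma negpow_fps_nth: "fps_nth (negpow_fps k a) m = pochhammer k m / fact m * a ^ m"
  unfolding negpow_fps_def by simp

lemma fps_nth_one_minus_const_X_mult:
  "fps_nth ((1 - fps_const a * fps_X) * A) n =
     fps_nth A n - (if n = 0 then 0 else a * fps_nth (A :: real fps) (n - 1))"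
proof -
  have "(1 - fps_const a * fps_X) * A = A - fps_const a * (fps_X * A)"
    by (simp add: algebra_simps)
  then show ?thesis by simp
qed

lemma pochhammer_add_one_Suc:
  "pochhammer (k + 1) (Suc j) - of_nat (Suc j) * pochhammer (k + 1) j = pochhammer (k::real) (Suc j)"
  unfolding pochhammer_rec[of k j] pochhammer_rec'[of "k + 1" j] by (simp add: algebra_simps)

lemma one_minus_const_X_mult_negpow_fps:
  "(1 - fps_const a * fps_X) * negpow_fps (k + 1) a = negpow_fps k a"
proof (rule fps_ext)
  fix n
  show "fps_nth ((1 - fps_const a * fps_X) * negpow_fps (k + 1) a) n = fps_nth (negpow_fps k a) n"
  proof (cases n)
    case (Suc j)
    define c where "c m = pochhammer (k + 1) m / fact m * a ^ m" for m
    have "a * c j = of_nat (Suc j) * pochhammer (k + 1) j / fact (Suc j) * a ^ Suc j"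
      unfolding c_def by (simp add: field_simps del: of_nat_Suc)
    then have "c (Suc j) - a * c j
        = (pochhammer (k + 1) (Suc j) - of_nat (Suc j) * pochhammer (k + 1) j) / fact (Suc j) * a ^ Suc j"
      unfolding c_def by (simp add: left_diff_distrib diff_divide_distrib)
    then show ?thesis
      unfolding pochhammer_add_one_Suc using Suc
      by (simp add: fps_nth_one_minus_const_X_mult negpow_fps_nth c_def del: power_Suc)
  qed (simp add: negpow_fps_nth)
qed

lemma negpow_fps_0: "negpow_fps 0 a = 1"
  by (rule fps_ext) (simp add: negpow_fps_nth pochhammer_0_left)

lemma geom_fps_eq_negpow_fps: "geom_fps a = negpow_fps 1 a"
  unfolding geom_fps_def
  using one_minus_const_X_mult_negpow_fps[of a 0] by (simp add: negpow_fps_0 fps_inverse_unique)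

lemma geom_fps_nth: "fps_nth (geom_fps a) n = a ^ n"
  by (simp add: geom_fps_eq_negpow_fps negpow_fps_nth pochhammer_fact[symmetric])

lemma one_minus_const_X_mult_geom_fps: "(1 - fps_const a * fps_X) * geom_fps a = 1"
  using one_minus_const_X_mult_negpow_fps[of a 0] by (simp add: geom_fps_eq_negpow_fps negpow_fps_0)

lemma const_X_mult_geom_fps: "fps_const a * fps_X * geom_fps a = geom_fps a - 1"
  using one_minus_const_X_mult_geom_fps[of a] by (simp add: algebra_simps)

lemma geom_fps_diff:
  "geom_fps a - geom_fps b = fps_const (a - b) * fps_X * geom_fps a * geom_fps b"
proof -
  have "fps_const a * fps_X * geom_fps a = geom_fps a - 1"
    and "fps_const b * fps_X * geom_fps b = geom_fps b - 1"
    by (rule const_X_mult_geom_fps)+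
  moreover have "fps_const (a - b) = fps_const a - (fps_const b :: real fps)" by simp
  ultimately show ?thesis by algebra
qed

lemma negpow_fps_add_one: "negpow_fps (k + 1) a = geom_fps a * negpow_fps k a"
proof -
  have "negpow_fps (k + 1) a = geom_fps a * ((1 - fps_const a * fps_X) * negpow_fps (k + 1) a)"
    using one_minus_const_X_mult_geom_fps[of a] by (simp add: ac_simps)
  then show ?thesis by (simp only: one_minus_const_X_mult_negpow_fps)
qed

lemma fps_deriv_negpow_fps:
  "fps_deriv (negpow_fps k a) = fps_const (k * a) * negpow_fps (k + 1) a"
proof (rule fps_ext)
  fix n
  have "fact n \<noteq> (0::real)" by simp
  then show "fps_nth (fps_deriv (negpow_fps k a)) n = fps_nth (fps_const (k * a) * negpow_fps (k + 1) a) n"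
    by (simp add: fps_deriv_nth negpow_fps_nth pochhammer_rec[of k] field_simps del: of_nat_Suc)
qed

lemma fps_deriv_geom_fps: "fps_deriv (geom_fps a) = fps_const a * geom_fps a * geom_fps a"
  using fps_deriv_negpow_fps[of 1 a] negpow_fps_add_one[of 1 a]
  by (simp add: geom_fps_eq_negpow_fps mult.assoc)

lemma negpow_fps_compose_uminus_X: "negpow_fps k a oo - fps_X = negpow_fps k (- a)"
  by (rule fps_ext) (simp add: fps_compose_uminus' negpow_fps_nth power_minus[of a])

lemma geom_fps_compose_uminus_X: "geom_fps a oo - fps_X = geom_fps (- a)"
  by (simp add: geom_fps_eq_negpow_fps negpow_fps_compose_uminus_X)

lemma fps_nth_prod_0: "finite S \<Longrightarrow> fps_nth (\<Prod>y\<in>S. f y) 0 = (\<Prod>y\<in>S. fps_nth (f y) 0)"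
  by (induction S rule: finite_induct) simp_all

lemma fps_deriv_prod:
  fixes f :: "'a \<Rightarrow> 'b::comm_ring_1 fps"
  assumes "finite S" and "\<And>y. y \<in> S \<Longrightarrow> fps_deriv (f y) = f y * g y"
  shows "fps_deriv (\<Prod>y\<in>S. f y) = (\<Prod>y\<in>S. f y) * (\<Sum>y\<in>S. g y)"
  using assms by (induction S rule: finite_induct) (simp_all add: algebra_simps)

section \<open>Coefficientwise calculus for families of power series\<close>

text \<open>
  The coefficients of the generating function of the q_n are polynomials in x, so derivatives
  and limits in x can be taken one coefficient at a time.
\<close>

definition has_fps_coeff_derivative :: "(real \<Rightarrow> real fps) \<Rightarrow> real fps \<Rightarrow> bool" where
  "has_fps_coeff_derivative A A' \<longleftrightarrow>
     (\<forall>n. ((\<lambda>t. fps_nth (A t) n) has_field_derivative fps_nth A' n) (at 0))"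

lemma has_fps_coeff_derivative_mult:
  assumes "has_fps_coeff_derivative A A'" and "has_fps_coeff_derivative B B'"
  shows "has_fps_coeff_derivative (\<lambda>t. A t * B t) (A' * B 0 + A 0 * B')"
  unfolding has_fps_coeff_derivative_def
proof
  fix n
  have "((\<lambda>t. \<Sum>i=0..n. fps_nth (A t) i * fps_nth (B t) (n - i)) has_field_derivative
      (\<Sum>i=0..n. fps_nth (A 0) i * fps_nth B' (n - i) + fps_nth A' i * fps_nth (B 0) (n - i))) (at 0)"
    using assms unfolding has_fps_coeff_derivative_def by (intro DERIV_sum DERIV_mult') auto
  then show "((\<lambda>t. fps_nth (A t * B t) n) has_field_derivative fps_nth (A' * B 0 + A 0 * B') n) (at 0)"
    by (simp add: fps_mult_nth sum.distrib add.commute)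
qed

lemma has_fps_coeff_derivative_prod:
  assumes "finite S" and "\<And>y. y \<in> S \<Longrightarrow> has_fps_coeff_derivative (f y) (f y 0 * g y)"
  shows "has_fps_coeff_derivative (\<lambda>t. \<Prod>y\<in>S. f y t) ((\<Prod>y\<in>S. f y 0) * (\<Sum>y\<in>S. g y))"
  using assms
proof (induction S rule: finite_induct)
  case empty
  then show ?case by (simp add: has_fps_coeff_derivative_def)
next
  case (insert x F)
  then have "has_fps_coeff_derivative (\<lambda>t. f x t * (\<Prod>y\<in>F. f y t))
      (f x 0 * g x * (\<Prod>y\<in>F. f y 0) + f x 0 * ((\<Prod>y\<in>F. f y 0) * (\<Sum>y\<in>F. g y)))"
    by (intro has_fps_coeff_derivative_mult) auto
  with insert show ?case by (simp add: algebra_simps)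
qed

lemma has_fps_coeff_derivative_negpow_fps:
  "has_fps_coeff_derivative (\<lambda>t. negpow_fps k (a + t * d))
     (fps_const (k * d) * fps_X * negpow_fps (k + 1) a)"
  unfolding has_fps_coeff_derivative_def
proof
  fix n
  have "((\<lambda>t. (a + t * d) ^ n) has_field_derivative of_nat n * (a + 0 * d) ^ (n - 1) * d) (at 0)"
    by (auto intro!: derivative_eq_intros)
  then have "((\<lambda>t. pochhammer k n / fact n * (a + t * d) ^ n) has_field_derivative
      pochhammer k n / fact n * (of_nat n * a ^ (n - 1) * d)) (at 0)"
    by (intro DERIV_cmult) simp
  moreover have "pochhammer k n / fact n * (of_nat n * a ^ (n - 1) * d)
      = fps_nth (fps_const (k * d) * fps_X * negpow_fps (k + 1) a) n"
  proof (cases n)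
    case (Suc j)
    have "fact j \<noteq> (0::real)" by simp
    then show ?thesis
      using Suc by (simp add: negpow_fps_nth pochhammer_rec[of k] mult.assoc field_simps del: of_nat_Suc)
  qed simp
  ultimately show "((\<lambda>t. fps_nth (negpow_fps k (a + t * d)) n) has_field_derivative
      fps_nth (fps_const (k * d) * fps_X * negpow_fps (k + 1) a) n) (at 0)"
    by (simp add: negpow_fps_nth)
qed

lemma has_fps_coeff_derivative_geom_fps:
  "has_fps_coeff_derivative (\<lambda>t. geom_fps (a + t * d)) (fps_const d * fps_X * geom_fps a * geom_fps a)"
  using has_fps_coeff_derivative_negpow_fps[of 1 a d] negpow_fps_add_one[of 1 a]
  by (simp add: geom_fps_eq_negpow_fps mult.assoc)

definition fps_coeffs_continuous :: "('a::topological_space \<Rightarrow> real fps) \<Rightarrow> bool" where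
  "fps_coeffs_continuous A \<longleftrightarrow> (\<forall>n. continuous_on UNIV (\<lambda>x. fps_nth (A x) n))"

lemma fps_coeffs_continuous_mult:
  "fps_coeffs_continuous A \<Longrightarrow> fps_coeffs_continuous B \<Longrightarrow> fps_coeffs_continuous (\<lambda>x. A x * B x)"
  unfolding fps_coeffs_continuous_def fps_mult_nth by (auto intro!: continuous_intros)

lemma fps_coeffs_continuous_const: "fps_coeffs_continuous (\<lambda>x. C)"
  unfolding fps_coeffs_continuous_def by simp

lemma fps_coeffs_continuous_prod:
  "finite S \<Longrightarrow> (\<And>y. y \<in> S \<Longrightarrow> fps_coeffs_continuous (f y)) \<Longrightarrow>
     fps_coeffs_continuous (\<lambda>x. \<Prod>y\<in>S. f y x)"
  by (induction S rule: finite_induct)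
    (simp_all add: fps_coeffs_continuous_const fps_coeffs_continuous_mult)

lemma fps_coeffs_continuous_negpow_fps:
  "continuous_on UNIV f \<Longrightarrow> fps_coeffs_continuous (\<lambda>x. negpow_fps k (f x))"
  unfolding fps_coeffs_continuous_def negpow_fps_nth by (auto intro!: continuous_intros)

lemma fps_coeffs_continuous_geom_fps:
  "continuous_on UNIV f \<Longrightarrow> fps_coeffs_continuous (\<lambda>x. geom_fps (f x))"
  unfolding geom_fps_eq_negpow_fps by (rule fps_coeffs_continuous_negpow_fps)

lemma islimpt_nonorthogonal:
  fixes x v :: "'a::real_inner"
  assumes "v \<noteq> 0" and "x \<bullet> v = 0"
  shows "x islimpt {y. y \<bullet> v \<noteq> 0}"
proof (rule islimpt_approachable[THEN iffD2], intro allI impI)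
  fix e :: real
  assume "e > 0"
  define x' where "x' = x + (e / (2 * norm v)) *\<^sub>R v"
  have "x' \<bullet> v = e / (2 * norm v) * (v \<bullet> v)"
    unfolding x'_def using assms(2) by (simp add: inner_add_left)
  then have "x' \<bullet> v \<noteq> 0" using \<open>e > 0\<close> assms(1) by simp
  moreover have "dist x' x = e / 2" unfolding x'_def dist_norm using \<open>e > 0\<close> assms(1) by simp
  ultimately show "\<exists>x'\<in>{y. y \<bullet> v \<noteq> 0}. x' \<noteq> x \<and> dist x' x < e"
    using \<open>e > 0\<close> by (intro bexI[of _ x']) auto
qed

lemma divdiff_eq_continuous:
  assumes "v \<noteq> 0" and "continuous_on UNIV H"
    and "\<And>y. y \<bullet> v \<noteq> 0 \<Longrightarrow> (f y - f (refl v y)) / (y \<bullet> v) = H y"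
  shows "divdiff v f x = H x"
proof (cases "x \<bullet> v = 0")
  case True
  define S where "S = {y. y \<bullet> v \<noteq> 0}"
  have "(H \<longlongrightarrow> H x) (at x)"
    using assms(2) by (simp add: continuous_on_eq_continuous_at isCont_def)
  then have "(H \<longlongrightarrow> H x) (at x within S)"
    by (rule tendsto_within_subset) simp
  moreover have "\<forall>\<^sub>F y in at x within S. H y = (f y - f (refl v y)) / (y \<bullet> v)"
    unfolding eventually_at_filter S_def using assms(3) by simp
  ultimately have "((\<lambda>y. (f y - f (refl v y)) / (y \<bullet> v)) \<longlongrightarrow> H x) (at x within S)"
    using tendsto_cong by fastforce
  moreover have "\<not> trivial_limit (at x within S)"
    unfolding trivial_limit_within S_def using islimpt_nonorthogonal[OF assms(1) True] by simp
  ultimately show ?thesis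
    unfolding divdiff_def S_def using True by (simp add: tendsto_Lim)
qed (simp add: divdiff_def assms(3))

section \<open>The generating function of the q_n\<close>

definition ico_negpow_prod :: "real \<Rightarrow> real^3 \<Rightarrow> real fps" where
  "ico_negpow_prod k x = (\<Prod>y\<in>Ico. negpow_fps k (x \<bullet> y))"

lemma qn_eq_fps_nth: "qn k y0 n x = fps_nth (geom_fps (x \<bullet> y0) * ico_negpow_prod k x) n"
  unfolding qn_def geom_fps_def ico_negpow_prod_def ..

lemma qn_0: "qn k y0 0 x = 1"
  by (simp add: qn_eq_fps_nth ico_negpow_prod_def fps_nth_prod_0 finite_Ico geom_fps_nth
      negpow_fps_nth)

lemma ico_negpow_prod_refl: "v \<in> Rplus \<Longrightarrow> ico_negpow_prod k (refl v x) = ico_negpow_prod k x"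
  unfolding ico_negpow_prod_def inner_refl_left
  by (rule prod.reindex_bij_betw[OF bij_betw_refl_Ico])

lemma ico_negpow_prod_compose_uminus_X: "ico_negpow_prod k x oo - fps_X = ico_negpow_prod k x"
proof -
  have "ico_negpow_prod k x oo - fps_X = (\<Prod>y\<in>Ico. negpow_fps k (x \<bullet> - y))"
    by (simp add: ico_negpow_prod_def fps_compose_prod_distrib negpow_fps_compose_uminus_X)
  also have "\<dots> = ico_negpow_prod k x"
    unfolding ico_negpow_prod_def by (rule prod.reindex_bij_betw[OF bij_betw_uminus_Ico])
  finally show ?thesis .
qed

lemma qn_alternating:
  "fps_nth (geom_fps (- (x \<bullet> y0)) * ico_negpow_prod k x) m = (-1) ^ m * qn k y0 m x"
proof -
  have "geom_fps (- (x \<bullet> y0)) * ico_negpow_prod k x = (geom_fps (x \<bullet> y0) * ico_negpow_prod k x) oo - fps_X"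
    by (simp add: fps_compose_mult_distrib geom_fps_compose_uminus_X ico_negpow_prod_compose_uminus_X)
  then show ?thesis by (simp add: fps_compose_uminus' qn_eq_fps_nth)
qed

lemma fps_deriv_ico_negpow_prod:
  "fps_deriv (ico_negpow_prod k x) =
     fps_const k * ico_negpow_prod k x * (\<Sum>y\<in>Ico. fps_const (x \<bullet> y) * geom_fps (x \<bullet> y))"
proof -
  have "fps_deriv (ico_negpow_prod k x) =
      ico_negpow_prod k x * (\<Sum>y\<in>Ico. fps_const k * (fps_const (x \<bullet> y) * geom_fps (x \<bullet> y)))"
    unfolding ico_negpow_prod_def using finite_Ico
    by (rule fps_deriv_prod) (simp add: fps_deriv_negpow_fps negpow_fps_add_one mult_ac)
  then show ?thesis by (simp add: sum_distrib_left[symmetric] ac_simps)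
qed

lemma has_fps_coeff_derivative_ico_negpow_prod:
  "has_fps_coeff_derivative (\<lambda>t. ico_negpow_prod k (x + t *\<^sub>R u))
     (fps_const k * fps_X * ico_negpow_prod k x * (\<Sum>y\<in>Ico. fps_const (u \<bullet> y) * geom_fps (x \<bullet> y)))"
proof -
  have "has_fps_coeff_derivative (\<lambda>t. negpow_fps k ((x + t *\<^sub>R u) \<bullet> y))
      (negpow_fps k (x \<bullet> y) * (fps_const (k * (u \<bullet> y)) * fps_X * geom_fps (x \<bullet> y)))" for y
    using has_fps_coeff_derivative_negpow_fps[of k "x \<bullet> y" "u \<bullet> y"]
    by (simp add: inner_add_left negpow_fps_add_one mult_ac)
  then have "has_fps_coeff_derivative (\<lambda>t. ico_negpow_prod k (x + t *\<^sub>R u))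
      (ico_negpow_prod k x * (\<Sum>y\<in>Ico. fps_const (k * (u \<bullet> y)) * fps_X * geom_fps (x \<bullet> y)))"
    unfolding ico_negpow_prod_def
    using has_fps_coeff_derivative_prod[OF finite_Ico,
        where f = "\<lambda>y t. negpow_fps k ((x + t *\<^sub>R u) \<bullet> y)"
        and g = "\<lambda>y. fps_const (k * (u \<bullet> y)) * fps_X * geom_fps (x \<bullet> y)"]
    by simp
  moreover have "(\<Sum>y\<in>Ico. fps_const (k * (u \<bullet> y)) * fps_X * geom_fps (x \<bullet> y)) =
      fps_const k * fps_X * (\<Sum>y\<in>Ico. fps_const (u \<bullet> y) * geom_fps (x \<bullet> y))"
    unfolding sum_distrib_left by (intro sum.cong refl) (simp only: fps_const_mult[symmetric] ac_simps)
  ultimately show ?thesis by (simp add: ac_simps)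
qed

section \<open>The Dunkl operators on the q_n\<close>

lemma partial_qn:
  "partial i (\<lambda>x. c * qn k y0 n x) x =
     c * fps_nth (fps_X * geom_fps (x \<bullet> y0) * ico_negpow_prod k x *
       (fps_const (y0 $ i) * geom_fps (x \<bullet> y0) +
        fps_const k * (\<Sum>y\<in>Ico. fps_const (y $ i) * geom_fps (x \<bullet> y)))) n"
proof -
  define G where "G = geom_fps (x \<bullet> y0)"
  define P where "P = ico_negpow_prod k x"
  define S where "S = (\<Sum>y\<in>Ico. fps_const (y $ i) * geom_fps (x \<bullet> y))"
  have "has_fps_coeff_derivative (\<lambda>t. geom_fps ((x + t *\<^sub>R axis i 1) \<bullet> y0))
      (fps_const (y0 $ i) * fps_X * G * G)"
    using has_fps_coeff_derivative_geom_fps[of "x \<bullet> y0" "y0 $ i"]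
    by (simp add: G_def inner_add_left inner_axis' mult.commute)
  moreover have "has_fps_coeff_derivative (\<lambda>t. ico_negpow_prod k (x + t *\<^sub>R axis i 1))
      (fps_const k * fps_X * P * S)"
    using has_fps_coeff_derivative_ico_negpow_prod[of k x "axis i 1"]
    by (simp add: P_def S_def inner_axis')
  ultimately have "has_fps_coeff_derivative
      (\<lambda>t. geom_fps ((x + t *\<^sub>R axis i 1) \<bullet> y0) * ico_negpow_prod k (x + t *\<^sub>R axis i 1))
      (fps_X * G * P * (fps_const (y0 $ i) * G + fps_const k * S))"
    using has_fps_coeff_derivative_mult by (fastforce simp: G_def P_def algebra_simps)
  then have "((\<lambda>t. c * qn k y0 n (x + t *\<^sub>R axis i 1)) has_field_derivative
      c * fps_nth (fps_X * G * P * (fps_const (y0 $ i) * G + fps_const k * S)) n) (at 0)"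
    unfolding has_fps_coeff_derivative_def qn_eq_fps_nth by (intro DERIV_cmult) simp
  then show ?thesis
    unfolding partial_def G_def P_def S_def by (rule DERIV_imp_deriv)
qed

lemma divdiff_qn:
  assumes "v \<in> Rplus"
  shows "divdiff v (\<lambda>x. c * qn k y0 n x) x =
    c * fps_nth (fps_const (2 * (y0 \<bullet> v) / (v \<bullet> v)) * fps_X * geom_fps (x \<bullet> y0) *
      geom_fps (x \<bullet> refl v y0) * ico_negpow_prod k x) n"
proof (rule divdiff_eq_continuous[where H = "\<lambda>x. c * fps_nth (fps_const (2 * (y0 \<bullet> v) / (v \<bullet> v)) *
    fps_X * geom_fps (x \<bullet> y0) * geom_fps (x \<bullet> refl v y0) * ico_negpow_prod k x) n"])
  show "v \<noteq> 0" using Rplus_inner_self[OF assms] by auto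
  have "fps_coeffs_continuous (\<lambda>x. fps_const (2 * (y0 \<bullet> v) / (v \<bullet> v)) * fps_X *
      geom_fps (x \<bullet> y0) * geom_fps (x \<bullet> refl v y0) * ico_negpow_prod k x)"
    unfolding ico_negpow_prod_def
    by (intro fps_coeffs_continuous_mult fps_coeffs_continuous_const fps_coeffs_continuous_geom_fps
        fps_coeffs_continuous_prod finite_Ico fps_coeffs_continuous_negpow_fps continuous_intros)
  then show "continuous_on UNIV (\<lambda>x. c * fps_nth (fps_const (2 * (y0 \<bullet> v) / (v \<bullet> v)) * fps_X *
      geom_fps (x \<bullet> y0) * geom_fps (x \<bullet> refl v y0) * ico_negpow_prod k x) n)"
    unfolding fps_coeffs_continuous_def by (intro continuous_on_mult_left) blast
next
  fix y :: "real^3"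
  assume "y \<bullet> v \<noteq> 0"
  define cv where "cv = 2 * (y0 \<bullet> v) / (v \<bullet> v)"
  define G where "G = geom_fps (y \<bullet> y0)"
  define G' where "G' = geom_fps (y \<bullet> refl v y0)"
  define P where "P = ico_negpow_prod k y"
  have "y \<bullet> y0 - y \<bullet> refl v y0 = cv * (y \<bullet> v)"
    unfolding cv_def inner_diff_right[symmetric] diff_refl by simp
  then have G_diff: "G - G' = fps_const (y \<bullet> v) * (fps_const cv * fps_X * G * G')"
    unfolding G_def G'_def by (simp add: geom_fps_diff mult.assoc mult.left_commute)
  have "qn k y0 n (refl v y) = fps_nth (G' * P) n"
    by (simp add: G'_def P_def qn_eq_fps_nth ico_negpow_prod_refl[OF assms] inner_refl_left)
  then have "c * qn k y0 n y - c * qn k y0 n (refl v y) = c * fps_nth ((G - G') * P) n"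
    by (simp add: G_def P_def qn_eq_fps_nth left_diff_distrib right_diff_distrib)
  also have "\<dots> = (y \<bullet> v) * (c * fps_nth (fps_const cv * fps_X * G * G' * P) n)"
    unfolding G_diff by (simp add: mult.assoc)
  finally show "(c * qn k y0 n y - c * qn k y0 n (refl v y)) / (y \<bullet> v) =
      c * fps_nth (fps_const (2 * (y0 \<bullet> v) / (v \<bullet> v)) * fps_X * geom_fps (y \<bullet> y0) *
        geom_fps (y \<bullet> refl v y0) * ico_negpow_prod k y) n"
    using \<open>y \<bullet> v \<noteq> 0\<close> by (simp add: cv_def G_def G'_def P_def)
qed

lemma sum_Ico_Rplus_geom_fps:
  assumes "y0 \<in> Ico"
  shows "(\<Sum>y\<in>Ico. fps_const (y $ i) * geom_fps (x \<bullet> y)) +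
      (\<Sum>v\<in>Rplus. fps_const ((y0 - refl v y0) $ i) * geom_fps (x \<bullet> refl v y0)) =
    fps_const (y0 $ i) * ((\<Sum>y\<in>Ico. geom_fps (x \<bullet> y)) - 2 * geom_fps (- (x \<bullet> y0)))"
proof -
  define B where "B = Ico - {- y0}"
  have "- y0 \<in> Ico" using uminus_mem_Ico[OF assms] .
  have S2: "(\<Sum>v\<in>Rplus. fps_const ((y0 - refl v y0) $ i) * geom_fps (x \<bullet> refl v y0)) =
      (\<Sum>y\<in>B. fps_const ((y0 - y) $ i) * geom_fps (x \<bullet> y))"
    unfolding B_def by (rule sum_Rplus_refl[OF assms]) simp
  have S1: "(\<Sum>y\<in>Ico. fps_const (y $ i) * geom_fps (x \<bullet> y)) =
      - fps_const (y0 $ i) * geom_fps (- (x \<bullet> y0)) + (\<Sum>y\<in>B. fps_const (y $ i) * geom_fps (x \<bullet> y))"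
    using sum.remove[OF finite_Ico \<open>- y0 \<in> Ico\<close>, of "\<lambda>y. fps_const (y $ i) * geom_fps (x \<bullet> y)"]
    by (simp add: B_def)
  have A: "(\<Sum>y\<in>Ico. geom_fps (x \<bullet> y)) = geom_fps (- (x \<bullet> y0)) + (\<Sum>y\<in>B. geom_fps (x \<bullet> y))"
    using sum.remove[OF finite_Ico \<open>- y0 \<in> Ico\<close>, of "\<lambda>y. geom_fps (x \<bullet> y)"]
    by (simp add: B_def)
  have "(\<Sum>y\<in>B. fps_const (y $ i) * geom_fps (x \<bullet> y)) +
      (\<Sum>y\<in>B. fps_const ((y0 - y) $ i) * geom_fps (x \<bullet> y)) = fps_const (y0 $ i) * (\<Sum>y\<in>B. geom_fps (x \<bullet> y))"
    unfolding sum.distrib[symmetric] sum_distrib_left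
    by (intro sum.cong refl) (simp add: distrib_right[symmetric])
  then show ?thesis
    unfolding S1 S2 A by algebra
qed

text \<open>Apart from the hypotheses, this only uses 2 G Gm = G + Gm.\<close>

lemma geom_fps_generating_identity:
  fixes G Gm P A K :: "real fps"
  assumes "fps_const a * fps_X * G = G - 1" and "fps_const (- a) * fps_X * Gm = Gm - 1"
    and "fps_X * K = A - fps_const N"
    and "fps_deriv G = fps_const a * G * G" and "fps_deriv P = fps_const k * P * K"
  shows "G * P * (G + fps_const k * (A - 2 * Gm)) =
    fps_deriv (fps_X * G * P) + fps_const ((N - 1) * k) * G * P - fps_const k * Gm * P"
proof -
  have "fps_deriv (fps_X * G * P) = G * P + fps_X * (fps_const a * G * G * P + G * (fps_const k * P * K))"
    by (simp add: fps_deriv_mult assms(4,5) algebra_simps)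
  moreover have "fps_const ((N - 1) * k) = (fps_const N - 1) * (fps_const k :: real fps)"
    by simp
  moreover have "fps_const (- a) = - (fps_const a :: real fps)"
    by simp
  ultimately show ?thesis
    using assms(1-3) by algebra
qed

lemma sum_Rplus_divdiff_qn:
  "(\<Sum>v\<in>Rplus. divdiff v (\<lambda>x. c * qn k y0 n x) x * v $ i) =
     c * fps_nth (fps_X * geom_fps (x \<bullet> y0) * ico_negpow_prod k x *
       (\<Sum>v\<in>Rplus. fps_const ((y0 - refl v y0) $ i) * geom_fps (x \<bullet> refl v y0))) n"
proof -
  define G where "G = geom_fps (x \<bullet> y0)"
  define P where "P = ico_negpow_prod k x"
  have "divdiff v (\<lambda>x. c * qn k y0 n x) x * v $ i =
      c * fps_nth (fps_X * G * P * (fps_const ((y0 - refl v y0) $ i) * geom_fps (x \<bullet> refl v y0))) n"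
    if "v \<in> Rplus" for v
  proof -
    have "fps_const (2 * (y0 \<bullet> v) / (v \<bullet> v)) * fps_X * G * geom_fps (x \<bullet> refl v y0) * P =
        fps_const (2 * (y0 \<bullet> v) / (v \<bullet> v)) * (fps_X * G * P * geom_fps (x \<bullet> refl v y0))"
      and "fps_X * G * P * (fps_const ((y0 - refl v y0) $ i) * geom_fps (x \<bullet> refl v y0)) =
        fps_const ((y0 - refl v y0) $ i) * (fps_X * G * P * geom_fps (x \<bullet> refl v y0))"
      by (simp_all only: ac_simps)
    then show ?thesis
      unfolding divdiff_qn[OF that] G_def[symmetric] P_def[symmetric]
      by (simp only: fps_mult_left_const_nth) (simp add: diff_refl)
  qed
  then have "(\<Sum>v\<in>Rplus. divdiff v (\<lambda>x. c * qn k y0 n x) x * v $ i) =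
      (\<Sum>v\<in>Rplus. c * fps_nth (fps_X * G * P *
        (fps_const ((y0 - refl v y0) $ i) * geom_fps (x \<bullet> refl v y0))) n)"
    by (rule sum.cong[OF refl])
  then show ?thesis
    by (simp add: G_def P_def sum_distrib_left fps_sum_nth)
qed

lemma dunkl_qn_eq_fps_nth:
  assumes "y0 \<in> Ico"
  shows "dunkl k i (\<lambda>x. c * qn k y0 n x) x =
    c * fps_nth (fps_const (y0 $ i) * fps_X * geom_fps (x \<bullet> y0) * ico_negpow_prod k x *
      (geom_fps (x \<bullet> y0) + fps_const k * ((\<Sum>y\<in>Ico. geom_fps (x \<bullet> y)) - 2 * geom_fps (- (x \<bullet> y0))))) n"
proof -
  define G where "G = geom_fps (x \<bullet> y0)"
  define P where "P = ico_negpow_prod k x"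
  define S1 where "S1 = (\<Sum>y\<in>Ico. fps_const (y $ i) * geom_fps (x \<bullet> y))"
  define S2 where "S2 = (\<Sum>v\<in>Rplus. fps_const ((y0 - refl v y0) $ i) * geom_fps (x \<bullet> refl v y0))"
  have "dunkl k i (\<lambda>x. c * qn k y0 n x) x =
      c * fps_nth (fps_X * G * P * (fps_const (y0 $ i) * G + fps_const k * S1)) n +
      k * (c * fps_nth (fps_X * G * P * S2) n)"
    unfolding dunkl_def partial_qn sum_Rplus_divdiff_qn G_def P_def S1_def S2_def ..
  also have "\<dots> = c * fps_nth (fps_X * G * P * (fps_const (y0 $ i) * G + fps_const k * S1) +
      fps_const k * (fps_X * G * P * S2)) n"
    by (simp only: fps_add_nth fps_mult_left_const_nth distrib_left mult.left_commute)
  also have "fps_X * G * P * (fps_const (y0 $ i) * G + fps_const k * S1) + fps_const k * (fps_X * G * P * S2)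
      = fps_X * G * P * (fps_const (y0 $ i) * G + fps_const k * (S1 + S2))"
    by (simp add: algebra_simps)
  also have "S1 + S2 = fps_const (y0 $ i) * ((\<Sum>y\<in>Ico. geom_fps (x \<bullet> y)) - 2 * geom_fps (- (x \<bullet> y0)))"
    unfolding S1_def S2_def by (rule sum_Ico_Rplus_geom_fps[OF assms])
  finally show ?thesis
    by (simp add: G_def P_def algebra_simps)
qed

lemma dunkl_qn:
  assumes "y0 \<in> Ico"
  shows "dunkl k i (\<lambda>x. c * qn k y0 (Suc m) x) =
    (\<lambda>x. c * (of_nat (Suc m) + 11 * k - k * (-1) ^ m) * y0 $ i * qn k y0 m x)"
proof
  fix x
  define G where "G = geom_fps (x \<bullet> y0)"
  define Gm where "Gm = geom_fps (- (x \<bullet> y0))"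
  define P where "P = ico_negpow_prod k x"
  define A where "A = (\<Sum>y\<in>Ico. geom_fps (x \<bullet> y))"
  define K where "K = (\<Sum>y\<in>Ico. fps_const (x \<bullet> y) * geom_fps (x \<bullet> y))"
  have "fps_X * K = (\<Sum>y\<in>Ico. geom_fps (x \<bullet> y) - 1)"
    unfolding K_def sum_distrib_left
    by (intro sum.cong refl) (metis const_X_mult_geom_fps mult.assoc mult.commute)
  also have "\<dots> = A - fps_const 12"
    by (simp add: A_def sum_subtractf card_Ico numeral_fps_const)
  finally have generating_identity: "G * P * (G + fps_const k * (A - 2 * Gm)) =
      fps_deriv (fps_X * G * P) + fps_const ((12 - 1) * k) * G * P - fps_const k * Gm * P"
    by (intro geom_fps_generating_identity[where a = "x \<bullet> y0" and K = K])
      (simp_all add: G_def Gm_def P_def K_def const_X_mult_geom_fps fps_deriv_geom_fps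
        fps_deriv_ico_negpow_prod)
  have q: "fps_nth (G * P) m = qn k y0 m x"
    by (simp add: G_def P_def qn_eq_fps_nth)
  have q_alt: "fps_nth (Gm * P) m = (-1) ^ m * qn k y0 m x"
    using qn_alternating[of x y0 k m] by (simp add: Gm_def P_def)
  have q_deriv: "fps_nth (fps_deriv (fps_X * (G * P))) m = of_nat (Suc m) * qn k y0 m x"
    unfolding fps_deriv_nth q[symmetric] by simp
  have "fps_nth (G * P * (G + fps_const k * (A - 2 * Gm))) m =
      fps_nth (fps_deriv (fps_X * (G * P))) m + 11 * k * fps_nth (G * P) m - k * fps_nth (Gm * P) m"
    unfolding generating_identity by (simp add: mult.assoc del: fps_deriv_mult)
  then have generating: "fps_nth (G * P * (G + fps_const k * (A - 2 * Gm))) m =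
      (of_nat (Suc m) + 11 * k - k * (-1) ^ m) * qn k y0 m x"
    unfolding q_deriv q q_alt by (simp add: algebra_simps)
  have "dunkl k i (\<lambda>x. c * qn k y0 (Suc m) x) x =
      c * fps_nth (fps_const (y0 $ i) * (fps_X * (G * P * (G + fps_const k * (A - 2 * Gm))))) (Suc m)"
    unfolding dunkl_qn_eq_fps_nth[OF assms] by (simp add: G_def Gm_def P_def A_def mult.assoc)
  then show "dunkl k i (\<lambda>x. c * qn k y0 (Suc m) x) x =
      c * (of_nat (Suc m) + 11 * k - k * (-1) ^ m) * y0 $ i * qn k y0 m x"
    using generating by simp
qed

lemma nu_Suc: "nu k (Suc m) = (of_nat (Suc m) + 11 * k - k * (-1) ^ m) * nu k m"
proof (cases "even m")
  case True
  then obtain j where "m = 2 * j" by blast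
  then show ?thesis unfolding nu_def by (simp add: pochhammer_Suc algebra_simps)
next
  case False
  then obtain j where "m = 2 * j + 1" by (blast elim: oddE)
  then show ?thesis unfolding nu_def by (simp add: pochhammer_Suc algebra_simps)
qed

lemma nu_pos: "k \<ge> 0 \<Longrightarrow> nu k m > 0"
  unfolding nu_def by (intro mult_pos_pos pochhammer_pos) simp_all

lemma dunkl_funpow_qn:
  assumes "y0 \<in> Ico" and "k \<ge> 0"
  shows "(dunkl k i ^^ j) (\<lambda>x. c * qn k y0 (m + j) x) =
    (\<lambda>x. c * (nu k (m + j) / nu k m) * (y0 $ i) ^ j * qn k y0 m x)"
proof (induction j arbitrary: c)
  case 0
  then show ?case using nu_pos[OF assms(2), of m] by simp
next
  case (Suc j)
  have "(dunkl k i ^^ Suc j) (\<lambda>x. c * qn k y0 (m + Suc j) x) =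
      (dunkl k i ^^ j) (\<lambda>x. c * (of_nat (Suc (m + j)) + 11 * k - k * (-1) ^ (m + j)) * y0 $ i *
        qn k y0 (m + j) x)"
    by (simp only: add_Suc_right funpow_Suc_right o_apply dunkl_qn[OF assms(1)])
  also have "\<dots> = (\<lambda>x. c * (nu k (m + Suc j) / nu k m) * (y0 $ i) ^ Suc j * qn k y0 m x)"
    by (simp only: Suc.IH) (simp add: nu_Suc ac_simps)
  finally show ?case .
qed

lemma dunkl_monomial_qn:
  assumes "y0 \<in> Ico" and "k \<ge> 0" and "a + b + c = n"
  shows "((dunkl k 1 ^^ a) ((dunkl k 2 ^^ b) ((dunkl k 3 ^^ c) (qn k y0 n)))) 0 =
    nu k n * mono_eval (a, b, c) y0"
proof -
  define C3 where "C3 = nu k n / nu k (a + b) * (y0 $ 3) ^ c"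
  define C2 where "C2 = C3 * (nu k (a + b) / nu k a) * (y0 $ 2) ^ b"
  define C1 where "C1 = C2 * (nu k a / nu k 0) * (y0 $ 1) ^ a"
  have "(dunkl k 3 ^^ c) (qn k y0 n) = (\<lambda>x. C3 * qn k y0 (a + b) x)"
    using dunkl_funpow_qn[OF assms(1,2), where i = 3 and j = c and c = 1 and m = "a + b"] assms(3)
    by (simp add: C3_def)
  moreover have "(dunkl k 2 ^^ b) (\<lambda>x. C3 * qn k y0 (a + b) x) = (\<lambda>x. C2 * qn k y0 a x)"
    using dunkl_funpow_qn[OF assms(1,2), where i = 2 and j = b and c = C3 and m = a]
    by (simp add: C2_def)
  moreover have "(dunkl k 1 ^^ a) (\<lambda>x. C2 * qn k y0 a x) = (\<lambda>x. C1 * qn k y0 0 x)"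
    using dunkl_funpow_qn[OF assms(1,2), where i = 1 and j = a and c = C2 and m = 0]
    by (simp add: C1_def)
  moreover have "C1 = nu k n * mono_eval (a, b, c) y0"
    using nu_pos[OF assms(2), of "a + b"] nu_pos[OF assms(2), of a]
    by (simp add: C1_def C2_def C3_def mono_eval_def nu_def[of _ 0])
  ultimately show ?thesis by (simp add: qn_0)
qed

theorem mainTheorem5:
  fixes \<kappa> \<omega> :: real and p :: "nat \<times> nat \<times> nat \<Rightarrow> real" and n :: nat and y0 :: "real^3"
  assumes "\<kappa> \<ge> 0" and "\<omega> > 0" and "homogeneous p n" and "y0 \<in> Ico"
  shows "pairing \<kappa> \<omega> p (qn \<kappa> y0 n) = (2 * \<omega>) powi (- int n) * nu \<kappa> n * poly_eval p y0"
proof -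
  have "pairing \<kappa> \<omega> p (qn \<kappa> y0 n) =
      (\<Sum>\<alpha>\<in>{\<alpha>. p \<alpha> \<noteq> 0}. (1 / (2 * \<omega>)) ^ n * nu \<kappa> n * (p \<alpha> * mono_eval \<alpha> y0))"
    unfolding pairing_def
  proof (intro sum.cong refl)
    fix \<alpha> assume "\<alpha> \<in> {\<alpha>. p \<alpha> \<noteq> 0}"
    moreover obtain a b c where "\<alpha> = (a, b, c)" by (cases \<alpha>)
    ultimately have \<alpha>: "\<alpha> = (a, b, c)" and deg: "a + b + c = n"
      using assms(3) by (auto simp: homogeneous_def mdeg_def)
    show "(case \<alpha> of (a, b, c) \<Rightarrow> p \<alpha> * (1 / (2 * \<omega>)) ^ (a + b + c) *
        (dunkl \<kappa> 1 ^^ a) ((dunkl \<kappa> 2 ^^ b) ((dunkl \<kappa> 3 ^^ c) (qn \<kappa> y0 n))) 0) =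
        (1 / (2 * \<omega>)) ^ n * nu \<kappa> n * (p \<alpha> * mono_eval \<alpha> y0)"
      using dunkl_monomial_qn[OF assms(4,1) deg] \<alpha> deg by simp
  qed
  also have "\<dots> = (2 * \<omega>) powi (- int n) * nu \<kappa> n * poly_eval p y0"
    by (simp add: poly_eval_def sum_distrib_left power_int_minus power_one_over inverse_eq_divide)
  finally show ?thesis .
qed

end
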